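(* Let $\mathbf{A}\in\mathbb{R}^{n\times n}$ and $\mathbf{V}\in\mathbb{R}^{n\times r}$ with $r\le n$, and let $\mathbf{Q}_\perp\in\mathbb{R}^{n\times(n-r)}$ be the last $n-r$ columns of the orthogonal factor $\mathbf{Q}_{\rm full}$ of a full QR factorization $\mathbf{V}=\mathbf{Q}_{\rm full}\begin{bmatrix}\mathbf{R}\\\mathbf{0}\end{bmatrix}$. Then for every $k\ge r$ the polynomial $a(t)=e_k(\mathbf{A}+t\mathbf{V}\mathbf{V}^\top)$ has degree at most $r$, and its coefficient of $t^r$ equals \[\det(\mathbf{V}^\top\mathbf{V})\,e_{k-r}(\mathbf{Q}_\perp^\top\mathbf{A}\mathbf{Q}_\perp).\] In particular, for $k=n$, the coefficient of $t^r$ in $\det(\mathbf{A}+t\mathbf{V}\mathbf{V}^\top)$ equals $\det(\mathbf{V}^\top\mathbf{V})\det(\mathbf{Q}_\perp^\top\mathbf{A}\mathbf{Q}_\perp)=(-1)^r\det\begin{bmatrix}\mathbf{A}&\mathbf{V}\\\mathbf{V}^\top&0\end{bmatrix}$.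
   Context: For a square matrix $\mathbf{B}$ with eigenvalues $\lambda_1,\ldots,\lambda_m$, $e_k(\mathbf{B})=e_k(\lambda_1,\ldots,\lambda_m)$, where $e_k(\lambda_1,\ldots,\lambda_m)=\sum_{\#\mathcal{Y}=k}\prod_{i\in\mathcal{Y}}\lambda_i$ is the $k$-th elementary symmetric polynomial, with $e_0=1$; equivalently $e_k(\mathbf{B})$ is the sum of all $k\times k$ principal minors of $\mathbf{B}$. *)

theory Defs
  imports "Jordan_Normal_Form.Determinant" "Jordan_Normal_Form.DL_Submatrix"
    "HOL-Computational_Algebra.Polynomial"
begin

text \<open>k-th elementary symmetric function of the eigenvalues of a square matrix,
  written as the sum of all k x k principal minors.\<close>
definition esym_mat :: "nat \<Rightarrow> 'a::comm_ring_1 mat \<Rightarrow> 'a" where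
  "esym_mat k B = (\<Sum>Y\<in>{Y. Y \<subseteq> {0..<dim_row B} \<and> card Y = k}. det (submatrix B Y Y))"

definition pencil_mat :: "real mat \<Rightarrow> real mat \<Rightarrow> real poly mat" where
  "pencil_mat A V = map_mat (\<lambda>x. [:x:]) A + [:0, 1:] \<cdot>\<^sub>m map_mat (\<lambda>x. [:x:]) (V * V\<^sup>T)"

end

theory Submission
  imports Defs "Jordan_Normal_Form.Char_Poly"
begin

text \<open>
  Conjugating by the orthogonal factor \<open>Q\<close> turns \<open>A + t V V\<^sup>T\<close> into \<open>B + t C\<close> with
  \<open>B = Q\<^sup>T A Q\<close> and \<open>C = E E\<^sup>T\<close>, \<open>E = [R; 0]\<close>, so \<open>C\<close> vanishes outside its leading
  \<open>r \<times> r\<close> block \<open>R R\<^sup>T\<close>; as \<open>e\<^sub>k\<close> is a similarity invariant, it suffices to study \<open>B + t C\<close>.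
  Write the principal minor on an index set \<open>Y\<close> as an \<open>n \<times> n\<close> determinant by padding with
  the identity outside \<open>Y\<close>. Only its first \<open>r\<close> rows depend on \<open>t\<close>, and linearly, so it has
  degree at most \<open>r\<close>, and its coefficient of \<open>t\<^sup>r\<close> is the determinant in which these rows are
  replaced by their \<open>t\<close>-parts. That determinant vanishes unless \<open>{0..<r} \<subseteq> Y\<close>, and then it
  is block triangular, equal to \<open>det (R R\<^sup>T) = det (V\<^sup>T V)\<close> times the principal minor of the
  trailing block \<open>Q\<^sub>\<bottom>\<^sup>T A Q\<^sub>\<bottom>\<close> of \<open>B\<close> on the shifted set \<open>{j. r + j \<in> Y}\<close>. Summing over \<open>Y\<close>
  gives \<open>det (V\<^sup>T V) e\<^sub>k\<^sub>-\<^sub>r(Q\<^sub>\<bottom>\<^sup>T A Q\<^sub>\<bottom>)\<close>. The same conjugation reduces the bordered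
  determinant to that of \<open>[B E; E\<^sup>T 0]\<close>, where two block row swaps expose
  \<open>det R \<cdot> det R\<^sup>T \<cdot> det (Q\<^sub>\<bottom>\<^sup>T A Q\<^sub>\<bottom>)\<close> with sign \<open>(-1)\<^sup>r\<close>.
\<close>

section \<open>Principal minors and elementary symmetric functions\<close>

lemma bij_betw_pick:
  assumes "finite S"
  shows "bij_betw (pick S) {..<card S} S"
proof -
  have inj: "inj_on (pick S) {..<card S}"
  proof (rule inj_onI)
    fix i j assume "i \<in> {..<card S}" "j \<in> {..<card S}" "pick S i = pick S j"
    then show "i = j" by (metis lessThan_iff linorder_neqE_nat pick_mono less_irrefl)
  qed
  have "pick S ` {..<card S} \<subseteq> S" using pick_in_set by auto
  moreover have "card (pick S ` {..<card S}) = card S" by (simp add: card_image[OF inj])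
  ultimately have "pick S ` {..<card S} = S" using card_subset_eq[OF assms] by blast
  with inj show ?thesis by (simp add: bij_betw_def)
qed

lemma permutes_pick_append:
  assumes S: "S \<subseteq> {0..<n}"
  shows "(\<lambda>i. if i < card S then pick S i else if i < n then pick ({0..<n} - S) (i - card S) else i)
    permutes {0..<n}" (is "?f permutes _")
proof (rule bij_imp_permutes)
  let ?m = "card S" and ?C = "{0..<n} - S"
  have m: "?m \<le> n" using card_mono[OF _ S] by simp
  have C: "card ?C = n - ?m" using S by (simp add: card_Diff_subset finite_subset)
  have "bij_betw ?f {..<?m} S \<longleftrightarrow> bij_betw (pick S) {..<?m} S"
    by (rule bij_betw_cong) auto
  then have "bij_betw ?f {..<?m} S"
    using bij_betw_pick[of S] S finite_subset by blast
  moreover have "bij_betw ?f {?m..<n} ?C"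
  proof -
    have "bij_betw (\<lambda>i. i - ?m) {?m..<n} {..<card ?C}"
      unfolding C by (rule bij_betw_byWitness[where f' = "\<lambda>i. i + ?m"]) auto
    then have "bij_betw (pick ?C \<circ> (\<lambda>i. i - ?m)) {?m..<n} ?C"
      using bij_betw_pick[of ?C] by (auto intro: bij_betw_trans)
    then show ?thesis by (rule bij_betw_cong[THEN iffD1, rotated]) auto
  qed
  ultimately have "bij_betw ?f ({..<?m} \<union> {?m..<n}) (S \<union> ?C)"
    by (rule bij_betw_combine) auto
  moreover have "{..<?m} \<union> {?m..<n} = {0..<n}" "S \<union> ?C = {0..<n}" using m S by auto
  ultimately show "bij_betw ?f {0..<n} {0..<n}" by simp
  show "i \<notin> {0..<n} \<Longrightarrow> ?f i = i" for i using m by auto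
qed

lemma det_permute_rows_cols:
  fixes A :: "'a::comm_ring_1 mat"
  assumes A: "A \<in> carrier_mat n n" and f: "f permutes {0..<n}"
  shows "det (mat n n (\<lambda>(i, j). A $$ (f i, f j))) = det A"
proof -
  define A' where "A' = mat n n (\<lambda>(i, j). A $$ (i, f j))"
  have fn: "i < n \<Longrightarrow> f i < n" for i using f by (simp add: permutes_in_image)
  have "det (mat n n (\<lambda>(i, j). A $$ (f i, f j))) = signof f * det A'"
  proof -
    have "mat n n (\<lambda>(i, j). A $$ (f i, f j)) = mat n n (\<lambda>(i, j). A' $$ (f i, j))"
      by (rule eq_matI) (auto simp: A'_def fn)
    then show ?thesis using det_permute_rows[of A' n f] f by (simp add: A'_def)
  qed
  moreover have "det A' = signof f * det A"
  proof -
    have "A'\<^sup>T = mat n n (\<lambda>(i, j). A\<^sup>T $$ (f i, j))"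
      by (rule eq_matI) (use A in \<open>auto simp: A'_def fn\<close>)
    then have "det A'\<^sup>T = signof f * det A\<^sup>T"
      using det_permute_rows[of "A\<^sup>T" n f] A f by simp
    then show ?thesis using det_transpose A by (metis A'_def mat_carrier)
  qed
  ultimately show ?thesis by (simp add: sign_def)
qed

definition principal_pad :: "'a::comm_ring_1 mat \<Rightarrow> nat set \<Rightarrow> 'a mat" where
  "principal_pad M S = mat (dim_row M) (dim_row M)
     (\<lambda>(i, j). if i \<in> S \<and> j \<in> S then M $$ (i, j) else if i = j then 1 else 0)"

lemma principal_pad_carrier [simp]: "M \<in> carrier_mat n n \<Longrightarrow> principal_pad M S \<in> carrier_mat n n"
  by (simp add: principal_pad_def)

lemma principal_pad_index:
  "M \<in> carrier_mat n n \<Longrightarrow> i < n \<Longrightarrow> j < n \<Longrightarrow>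
   principal_pad M S $$ (i, j) = (if i \<in> S \<and> j \<in> S then M $$ (i, j) else if i = j then 1 else 0)"
  by (simp add: principal_pad_def)

lemma det_submatrix_eq_det_principal_pad:
  fixes M :: "'a::idom mat"
  assumes M: "M \<in> carrier_mat n n" and S: "S \<subseteq> {0..<n}"
  shows "det (submatrix M S S) = det (principal_pad M S)"
proof -
  let ?m = "card S" and ?C = "{0..<n} - S"
  txt \<open>Listing \<open>S\<close> first turns the padded matrix into \<open>diag (submatrix M S S, 1)\<close>.\<close>
  define f where "f i = (if i < ?m then pick S i else if i < n then pick ?C (i - ?m) else i)" for i
  have f: "f permutes {0..<n}" unfolding f_def by (rule permutes_pick_append[OF S])
  have m: "?m \<le> n" using card_mono[OF _ S] by simp
  have C: "card ?C = n - ?m" using S by (simp add: card_Diff_subset finite_subset)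
  have fn: "i < n \<Longrightarrow> f i < n" for i using f by (simp add: permutes_in_image)
  have fS: "i < n \<Longrightarrow> f i \<in> S \<longleftrightarrow> i < ?m" for i
  proof (cases "i < ?m")
    case True
    then show ?thesis using pick_in_set[of i S] by (simp add: f_def)
  next
    case False
    assume "i < n"
    then have "i - ?m < card ?C" using C False by linarith
    then have "f i \<in> ?C" using pick_in_set[of "i - ?m" ?C] False \<open>i < n\<close> by (simp add: f_def)
    then show ?thesis using False by simp
  qed
  have finj: "f i = f j \<longleftrightarrow> i = j" for i j
    by (rule inj_eq[OF permutes_inj[OF f]])
  have dimS: "card {i. i < n \<and> i \<in> S} = ?m"
  proof -
    have "{i. i < n \<and> i \<in> S} = S" using S by auto
    then show ?thesis by simp
  qed
  have sub: "submatrix M S S \<in> carrier_mat ?m ?m"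
    by (rule carrier_matI) (simp_all only: dim_submatrix carrier_matD[OF M] dimS)
  have sub_index: "i < ?m \<Longrightarrow> j < ?m \<Longrightarrow> submatrix M S S $$ (i, j) = M $$ (pick S i, pick S j)"
    for i j by (rule submatrix_index) (simp_all only: carrier_matD[OF M] dimS)
  let ?F = "four_block_mat (submatrix M S S) (0\<^sub>m ?m (n - ?m)) (0\<^sub>m (n - ?m) ?m) (1\<^sub>m (n - ?m))"
  have F: "?F \<in> carrier_mat n n" using sub m by auto
  have "mat n n (\<lambda>(i, j). principal_pad M S $$ (f i, f j)) = ?F"
  proof (rule eq_matI)
    fix i j assume "i < dim_row ?F" "j < dim_col ?F"
    then have ij: "i < n" "j < n" using F by auto
    have "principal_pad M S $$ (f i, f j)
        = (if i < ?m \<and> j < ?m then M $$ (pick S i, pick S j) else if i = j then 1 else 0)"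
      using ij by (simp add: principal_pad_index[OF M fn fn] fS finj) (simp add: f_def)
    then show "mat n n (\<lambda>(i, j). principal_pad M S $$ (f i, f j)) $$ (i, j) = ?F $$ (i, j)"
      using ij sub m by (auto simp: sub_index)
  qed (simp_all only: dim_row_mat dim_col_mat carrier_matD[OF F])
  then have "det (principal_pad M S) = det ?F"
    using det_permute_rows_cols[OF principal_pad_carrier[OF M] f] by metis
  also have "\<dots> = det (submatrix M S S)"
    using det_four_block_mat_upper_right_zero[OF sub refl zero_carrier_mat one_carrier_mat] by simp
  finally show ?thesis ..
qed

lemma principal_pad_leibniz_term:
  fixes M :: "'a::comm_ring_1 mat"
  assumes M: "M \<in> carrier_mat n n" and p: "p permutes {0..<n}" and S: "S \<subseteq> {0..<n}"
  shows "x ^ (n - card S) * (\<Prod>i\<in>{0..<n}. principal_pad M S $$ (i, p i))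
    = (\<Prod>i\<in>S. M $$ (i, p i)) * (\<Prod>i\<in>{0..<n} - S. if p i = i then x else 0)"
proof (cases "\<forall>i\<in>{0..<n} - S. p i = i")
  case True
  have pS: "p i \<in> S" if "i \<in> S" for i
  proof (rule ccontr)
    assume "p i \<notin> S"
    moreover have "p i < n" using that S p by (auto simp: permutes_in_image)
    ultimately have "p (p i) = p i" using True by auto
    then have "p i = i" using permutes_inj[OF p] by (auto dest: injD)
    with \<open>p i \<notin> S\<close> that show False by simp
  qed
  have "(\<Prod>i\<in>{0..<n} - S. if p i = i then x else 0) = x ^ (n - card S)"
    using True S by (simp add: card_Diff_subset finite_subset)
  moreover have "(\<Prod>i\<in>{0..<n}. principal_pad M S $$ (i, p i))
      = (\<Prod>i\<in>S. principal_pad M S $$ (i, p i)) * (\<Prod>i\<in>{0..<n} - S. principal_pad M S $$ (i, p i))"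
    using S by (simp add: prod.subset_diff mult.commute)
  moreover have "(\<Prod>i\<in>{0..<n} - S. principal_pad M S $$ (i, p i)) = 1"
    using True M by (intro prod.neutral) (auto simp: principal_pad_index)
  moreover have "(\<Prod>i\<in>S. principal_pad M S $$ (i, p i)) = (\<Prod>i\<in>S. M $$ (i, p i))"
    using S pS M p by (intro prod.cong) (auto simp: principal_pad_index permutes_in_image)
  ultimately show ?thesis by (simp add: mult.commute)
next
  case False
  then obtain i where i: "i \<in> {0..<n} - S" and pi: "p i \<noteq> i" by auto
  have "p i < n" using i p by (auto simp: permutes_in_image)
  then have "(\<Prod>i\<in>{0..<n}. principal_pad M S $$ (i, p i)) = 0"
    using i pi M by (intro prod_zero) (auto simp: principal_pad_index intro!: bexI[of _ i])
  moreover have "(\<Prod>i\<in>{0..<n} - S. if p i = i then x else 0) = 0"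
    using i pi by (intro prod_zero) auto
  ultimately show ?thesis by simp
qed

lemma det_smult_one_add_expansion:
  fixes M :: "'a::comm_ring_1 mat"
  assumes M: "M \<in> carrier_mat n n"
  shows "det (x \<cdot>\<^sub>m 1\<^sub>m n + M) = (\<Sum>S\<in>Pow {0..<n}. x ^ (n - card S) * det (principal_pad M S))"
proof -
  let ?I = "{0..<n}" and ?P = "{p. p permutes {0..<n}}"
  let ?D = "\<lambda>p i. if p i = i then x else 0"
  have car: "x \<cdot>\<^sub>m 1\<^sub>m n + M \<in> carrier_mat n n" using M by simp
  have "det (x \<cdot>\<^sub>m 1\<^sub>m n + M) = (\<Sum>p\<in>?P. signof p * (\<Prod>i\<in>?I. M $$ (i, p i) + ?D p i))"
    unfolding det_def'[OF car]
    by (intro sum.cong refl arg_cong[where f = "\<lambda>y. _ * y"] prod.cong)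
       (use M in \<open>auto simp: permutes_in_image\<close>)
  also have "\<dots> = (\<Sum>p\<in>?P. \<Sum>S\<in>Pow ?I. signof p * ((\<Prod>i\<in>S. M $$ (i, p i)) * (\<Prod>i\<in>?I - S. ?D p i)))"
    by (simp add: prod_add sum_distrib_left)
  also have "\<dots> = (\<Sum>S\<in>Pow ?I. \<Sum>p\<in>?P. signof p * ((\<Prod>i\<in>S. M $$ (i, p i)) * (\<Prod>i\<in>?I - S. ?D p i)))"
    by (rule sum.swap)
  also have "\<dots> = (\<Sum>S\<in>Pow ?I. x ^ (n - card S) * det (principal_pad M S))"
    using M unfolding det_def'[OF principal_pad_carrier[OF M]]
    by (intro sum.cong refl)
       (auto simp: sum_distrib_left principal_pad_leibniz_term[symmetric] ac_simps)
  finally show ?thesis .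
qed

lemma esym_mat_principal_pad:
  fixes M :: "'a::idom mat"
  assumes M: "M \<in> carrier_mat n n"
  shows "esym_mat k M = (\<Sum>S | S \<subseteq> {0..<n} \<and> card S = k. det (principal_pad M S))"
  unfolding esym_mat_def using M det_submatrix_eq_det_principal_pad[OF M]
  by (auto intro!: sum.cong)

interpretation const_poly: comm_ring_hom "\<lambda>a::'a::comm_ring_1. [:a:]"
  by unfold_locales auto

lemma esym_mat_eq_coeff_det:
  fixes M :: "'a::idom mat"
  assumes M: "M \<in> carrier_mat n n" and k: "k \<le> n"
  shows "esym_mat k M = coeff (det ([:0, 1:] \<cdot>\<^sub>m 1\<^sub>m n + map_mat (\<lambda>a. [:a:]) M)) (n - k)"
proof -
  have expansion: "det ([:0, 1:] \<cdot>\<^sub>m 1\<^sub>m n + map_mat (\<lambda>a. [:a:]) M)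
      = (\<Sum>S\<in>Pow {0..<n}. monom (det (principal_pad M S)) (n - card S))"
    unfolding det_smult_one_add_expansion[OF map_carrier_mat[THEN iffD2, OF M]]
  proof (intro sum.cong refl)
    fix S
    have "principal_pad (map_mat (\<lambda>a. [:a:]) M) S = map_mat (\<lambda>a. [:a:]) (principal_pad M S)"
      using M by (intro eq_matI) (auto simp: principal_pad_def)
    then show "[:0, 1:] ^ (n - card S) * det (principal_pad (map_mat (\<lambda>a. [:a:]) M) S)
      = monom (det (principal_pad M S)) (n - card S)"
      by (simp add: monom_altdef mult.commute)
  qed
  have "coeff (det ([:0, 1:] \<cdot>\<^sub>m 1\<^sub>m n + map_mat (\<lambda>a. [:a:]) M)) (n - k)
      = (\<Sum>S\<in>Pow {0..<n}. if card S = k then det (principal_pad M S) else 0)"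
  proof -
    have "n - card S = n - k \<longleftrightarrow> card S = k" if "S \<subseteq> {0..<n}" for S
      using card_mono[OF _ that] k by auto
    then show ?thesis
      unfolding expansion using k by (auto simp: coeff_sum coeff_monom intro!: sum.cong)
  qed
  also have "\<dots> = esym_mat k M"
    unfolding esym_mat_principal_pad[OF M] by (simp add: sum.If_cases Int_def conj_commute)
  finally show ?thesis ..
qed

lemma det_X_one_add_eq_char_poly:
  fixes M :: "'a::comm_ring_1 mat"
  assumes "M \<in> carrier_mat n n"
  shows "det ([:0, 1:] \<cdot>\<^sub>m 1\<^sub>m n + map_mat (\<lambda>a. [:a:]) M) = char_poly ((-1) \<cdot>\<^sub>m M)"
proof -
  have "map_mat (\<lambda>a. [:- a:]) ((-1) \<cdot>\<^sub>m M) = map_mat (\<lambda>a. [:a:]) M"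
    by (intro eq_matI) auto
  then show ?thesis using assms by (simp add: char_poly_defs)
qed

lemma esym_mat_eq_0:
  assumes "M \<in> carrier_mat n n" and "n < k"
  shows "esym_mat k M = 0"
proof -
  have "{S. S \<subseteq> {0..<dim_row M} \<and> card S = k} = {}"
  proof (intro equals0I)
    fix S assume "S \<in> {S. S \<subseteq> {0..<dim_row M} \<and> card S = k}"
    then have "S \<subseteq> {0..<n}" "card S = k" using assms(1) by auto
    then show False using card_mono[of "{0..<n}" S] assms(2) by simp
  qed
  then show ?thesis unfolding esym_mat_def by (simp only: sum.empty)
qed

lemma esym_mat_similar:
  fixes A B :: "'a::idom mat"
  assumes "similar_mat A B"
  shows "esym_mat k A = esym_mat k B"
proof -
  obtain n where A: "A \<in> carrier_mat n n" and B: "B \<in> carrier_mat n n"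
    using similar_matD[OF assms] by blast
  show ?thesis
  proof (cases "k \<le> n")
    case True
    have "char_poly ((-1) \<cdot>\<^sub>m A) = char_poly ((-1) \<cdot>\<^sub>m B)"
      by (rule char_poly_similar[OF similar_mat_smult[OF assms]])
    then show ?thesis
      using esym_mat_eq_coeff_det[OF A True] esym_mat_eq_coeff_det[OF B True]
        det_X_one_add_eq_char_poly[OF A] det_X_one_add_eq_char_poly[OF B] by simp
  next
    case False
    then show ?thesis using esym_mat_eq_0[OF A] esym_mat_eq_0[OF B] by simp
  qed
qed

lemma esym_mat_dim_eq_det:
  fixes M :: "'a::idom mat"
  assumes M: "M \<in> carrier_mat n n"
  shows "esym_mat n M = det M"
proof -
  have "{S. S \<subseteq> {0..<n} \<and> card S = n} = {{0..<n}}"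
    using card_subset_eq[of "{0..<n}"] by auto
  moreover have "principal_pad M {0..<n} = M"
    using M by (intro eq_matI) (auto simp: principal_pad_def)
  ultimately show ?thesis by (simp add: esym_mat_principal_pad[OF M])
qed

section \<open>Pencils whose direction has low rank\<close>

lemma coeff_mult_degree_le_sum:
  fixes p q :: "'a::comm_semiring_1 poly"
  assumes "degree p \<le> m" and "degree q \<le> k"
  shows "coeff (p * q) (m + k) = coeff p m * coeff q k"
proof -
  have "coeff (p * q) (m + k) = (\<Sum>i\<le>m + k. if i = m then coeff p m * coeff q k else 0)"
    unfolding coeff_mult
  proof (intro sum.cong refl)
    fix i assume "i \<in> {..m + k}"
    then consider "i = m" | "m < i" | "i < m \<and> k < m + k - i" by linarith
    then show "coeff p i * coeff q (m + k - i) = (if i = m then coeff p m * coeff q k else 0)"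
      by cases (use assms in \<open>auto simp: coeff_eq_0\<close>)
  qed
  then show ?thesis by simp
qed

lemma degree_coeff_prod_le_sum:
  fixes f :: "'b \<Rightarrow> 'a::comm_semiring_1 poly"
  assumes "finite I" and "\<And>i. i \<in> I \<Longrightarrow> degree (f i) \<le> d i"
  shows "degree (\<Prod>i\<in>I. f i) \<le> (\<Sum>i\<in>I. d i)
    \<and> coeff (\<Prod>i\<in>I. f i) (\<Sum>i\<in>I. d i) = (\<Prod>i\<in>I. coeff (f i) (d i))"
  using assms
proof (induction I rule: finite_induct)
  case (insert x I)
  then have IH: "degree (\<Prod>i\<in>I. f i) \<le> (\<Sum>i\<in>I. d i)"
    "coeff (\<Prod>i\<in>I. f i) (\<Sum>i\<in>I. d i) = (\<Prod>i\<in>I. coeff (f i) (d i))" by auto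
  have fx: "degree (f x) \<le> d x" using insert.prems by simp
  have "degree (f x * (\<Prod>i\<in>I. f i)) \<le> d x + (\<Sum>i\<in>I. d i)"
    using degree_mult_le[of "f x"] fx IH(1) by (meson add_mono order_trans)
  moreover have "coeff (f x * (\<Prod>i\<in>I. f i)) (d x + (\<Sum>i\<in>I. d i))
      = coeff (f x) (d x) * (\<Prod>i\<in>I. coeff (f i) (d i))"
    using coeff_mult_degree_le_sum[OF fx IH(1)] IH(2) by simp
  ultimately show ?case using insert.hyps by simp
qed simp

lemma det_poly_mat_row_degrees:
  fixes N :: "'a::comm_ring_1 poly mat"
  assumes N: "N \<in> carrier_mat n n"
    and deg: "\<And>i j. i < n \<Longrightarrow> j < n \<Longrightarrow> degree (N $$ (i, j)) \<le> d i"
  shows "degree (det N) \<le> (\<Sum>i<n. d i)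
    \<and> coeff (det N) (\<Sum>i<n. d i) = det (mat n n (\<lambda>(i, j). coeff (N $$ (i, j)) (d i)))"
proof -
  let ?K = "mat n n (\<lambda>(i, j). coeff (N $$ (i, j)) (d i))"
  have sign_mult: "degree (signof p * P) \<le> degree P \<and> coeff (signof p * P) k = signof p * coeff P k"
    for p and P :: "'a poly" and k
    by (cases "sign p = 1") (auto simp: sign_def)
  have summand: "degree (signof p * (\<Prod>i\<in>{0..<n}. N $$ (i, p i))) \<le> (\<Sum>i<n. d i)"
      "coeff (signof p * (\<Prod>i\<in>{0..<n}. N $$ (i, p i))) (\<Sum>i<n. d i)
        = signof p * (\<Prod>i\<in>{0..<n}. ?K $$ (i, p i))"
    if p: "p permutes {0..<n}" for p
  proof -
    have pn: "i < n \<Longrightarrow> p i < n" for i using p by (simp add: permutes_in_image)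
    have "degree (\<Prod>i\<in>{0..<n}. N $$ (i, p i)) \<le> (\<Sum>i\<in>{0..<n}. d i)
      \<and> coeff (\<Prod>i\<in>{0..<n}. N $$ (i, p i)) (\<Sum>i\<in>{0..<n}. d i)
        = (\<Prod>i\<in>{0..<n}. coeff (N $$ (i, p i)) (d i))"
      by (rule degree_coeff_prod_le_sum) (auto simp: deg pn)
    moreover have "(\<Prod>i\<in>{0..<n}. coeff (N $$ (i, p i)) (d i)) = (\<Prod>i\<in>{0..<n}. ?K $$ (i, p i))"
      by (intro prod.cong) (auto simp: pn)
    ultimately show "degree (signof p * (\<Prod>i\<in>{0..<n}. N $$ (i, p i))) \<le> (\<Sum>i<n. d i)"
        "coeff (signof p * (\<Prod>i\<in>{0..<n}. N $$ (i, p i))) (\<Sum>i<n. d i)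
        = signof p * (\<Prod>i\<in>{0..<n}. ?K $$ (i, p i))"
      using sign_mult[of p] by (auto simp: atLeast0LessThan intro: order_trans)
  qed
  have "degree (det N) \<le> (\<Sum>i<n. d i)"
    unfolding det_def'[OF N] by (intro degree_sum_le finite_permutations summand) auto
  moreover have "coeff (det N) (\<Sum>i<n. d i) = det ?K"
    unfolding det_def'[OF N] det_def'[OF mat_carrier] coeff_sum
    by (intro sum.cong refl summand) auto
  ultimately show ?thesis ..
qed

definition pencil :: "'a::comm_ring_1 mat \<Rightarrow> 'a mat \<Rightarrow> 'a poly mat" where
  "pencil B C = map_mat (\<lambda>x. [:x:]) B + [:0, 1:] \<cdot>\<^sub>m map_mat (\<lambda>x. [:x:]) C"

lemma pencil_carrier [simp]:
  "B \<in> carrier_mat n n \<Longrightarrow> C \<in> carrier_mat n n \<Longrightarrow> pencil B C \<in> carrier_mat n n"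
  by (simp add: pencil_def)

lemma pencil_index:
  "B \<in> carrier_mat n n \<Longrightarrow> C \<in> carrier_mat n n \<Longrightarrow> i < n \<Longrightarrow> j < n \<Longrightarrow>
   pencil B C $$ (i, j) = [:B $$ (i, j), C $$ (i, j):]"
  by (simp add: pencil_def)

lemma pencil_mat_eq_pencil: "pencil_mat A V = pencil A (V * V\<^sup>T)"
  by (simp add: pencil_mat_def pencil_def)

lemma similar_mat_pencil:
  fixes B C :: "'a::comm_ring_1 mat"
  assumes BB: "similar_mat_wit B B' P Q" and CC: "similar_mat_wit C C' P Q"
  shows "similar_mat (pencil B C) (pencil B' C')"
proof -
  define n where "n = dim_row B"
  note B = similar_mat_witD[OF n_def BB]
  have "dim_row C = n" using similar_mat_witD(6)[OF refl CC] B(6) by (metis carrier_matD(1))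
  note C = similar_mat_witD[OF this[symmetric] CC]
  let ?h = "map_mat (\<lambda>x::'a. [:x:])"
  have hP: "?h P \<in> carrier_mat n n" and hQ: "?h Q \<in> carrier_mat n n"
    and hB': "?h B' \<in> carrier_mat n n" and hC': "?h C' \<in> carrier_mat n n" using B C by auto
  have hconj: "?h (P * X * Q) = ?h P * ?h X * ?h Q" if "X \<in> carrier_mat n n" for X
    by (simp only: const_poly.mat_hom_mult[OF mult_carrier_mat[OF B(6) that] B(7)]
        const_poly.mat_hom_mult[OF B(6) that])
  have hinv: "?h P * ?h Q = 1\<^sub>m n" "?h Q * ?h P = 1\<^sub>m n"
    using const_poly.mat_hom_mult[OF B(6,7)] const_poly.mat_hom_mult[OF B(7,6)] B(1,2)
    by (simp_all add: const_poly.mat_hom_one)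
  have "?h P * pencil B' C' = ?h P * ?h B' + [:0, 1:] \<cdot>\<^sub>m (?h P * ?h C')"
    unfolding pencil_def
    by (simp add: mult_add_distrib_mat[OF hP hB' smult_carrier_mat[OF hC']]
        mult_smult_distrib[OF hP hC'])
  then have "?h P * pencil B' C' * ?h Q = ?h P * ?h B' * ?h Q + [:0, 1:] \<cdot>\<^sub>m (?h P * ?h C' * ?h Q)"
    by (simp only: add_mult_distrib_mat[OF mult_carrier_mat[OF hP hB']
        smult_carrier_mat[OF mult_carrier_mat[OF hP hC']] hQ]
        mult_smult_assoc_mat[OF mult_carrier_mat[OF hP hC'] hQ])
  also have "\<dots> = pencil B C"
    unfolding pencil_def B(3) C(3) using B(5) C(5) by (simp add: hconj)
  finally show ?thesis
    using B C hinv by (intro similar_matI[of _ _ "?h P" "?h Q" n]) auto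
qed

lemma det_eq_0_if_zero_row:
  fixes K :: "'a::comm_ring_1 mat"
  assumes K: "K \<in> carrier_mat n n" and i: "i < n" and zero: "\<And>j. j < n \<Longrightarrow> K $$ (i, j) = 0"
  shows "det K = 0"
  unfolding det_def'[OF K]
proof (intro sum.neutral ballI)
  fix p assume "p \<in> {p. p permutes {0..<n}}"
  then have "K $$ (i, p i) = 0" using i zero by (simp add: permutes_in_image)
  then have "(\<Prod>l\<in>{0..<n}. K $$ (l, p l)) = 0" using i by (intro prod_zero) auto
  then show "signof p * (\<Prod>l\<in>{0..<n}. K $$ (l, p l)) = 0" by simp
qed

lemma det_masked_top_rows_principal_pad:
  fixes B C :: "'a::idom mat"
  assumes B: "B \<in> carrier_mat n n" and rn: "r \<le> n" and Y: "Y \<subseteq> {0..<n}"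
    and C0: "\<And>i j. i < n \<Longrightarrow> j < n \<Longrightarrow> r \<le> i \<or> r \<le> j \<Longrightarrow> C $$ (i, j) = 0"
  shows "det (mat n n (\<lambda>(i, j). if i < r then if i \<in> Y \<and> j \<in> Y then C $$ (i, j) else 0
                                 else principal_pad B Y $$ (i, j)))
    = (if {0..<r} \<subseteq> Y
       then det (mat r r (\<lambda>(i, j). C $$ (i, j)))
         * det (principal_pad (mat (n - r) (n - r) (\<lambda>(i, j). B $$ (r + i, r + j))) {j. r + j \<in> Y})
       else 0)"
  (is "det ?K = _")
proof (cases "{0..<r} \<subseteq> Y")
  case False
  then obtain i where "i < r" "i \<notin> Y" by (auto simp: subset_iff)
  then have "det ?K = 0" using rn by (intro det_eq_0_if_zero_row[of _ n i]) auto
  with False show ?thesis by simp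
next
  case True
  let ?C1 = "mat r r (\<lambda>(i, j). C $$ (i, j))"
  let ?B2 = "principal_pad (mat (n - r) (n - r) (\<lambda>(i, j). B $$ (r + i, r + j))) {j. r + j \<in> Y}"
  let ?K21 = "mat (n - r) r (\<lambda>(i, j). principal_pad B Y $$ (r + i, j))"
  have B2: "?B2 \<in> carrier_mat (n - r) (n - r)" by simp
  have "?K = four_block_mat ?C1 (0\<^sub>m r (n - r)) ?K21 ?B2"
  proof (rule eq_matI)
    fix i j assume "i < dim_row (four_block_mat ?C1 (0\<^sub>m r (n - r)) ?K21 ?B2)"
      "j < dim_col (four_block_mat ?C1 (0\<^sub>m r (n - r)) ?K21 ?B2)"
    then have ij: "i < n" "j < n" using rn by (auto simp: principal_pad_def)
    have B22: "\<not> i < r \<Longrightarrow> \<not> j < r \<Longrightarrow> ?B2 $$ (i - r, j - r) = principal_pad B Y $$ (i, j)"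
      using ij B by (auto simp: principal_pad_def)
    show "?K $$ (i, j) = four_block_mat ?C1 (0\<^sub>m r (n - r)) ?K21 ?B2 $$ (i, j)"
      using ij rn B22 True C0 by (auto simp: principal_pad_def)
  qed (use rn in \<open>auto simp: principal_pad_def\<close>)
  then have "det ?K = det ?C1 * det ?B2"
    using det_four_block_mat_upper_right_zero[OF mat_carrier refl _ B2] by simp
  with True show ?thesis by simp
qed

lemma coeff_det_principal_pad_pencil:
  fixes B C :: "'a::idom mat"
  assumes B: "B \<in> carrier_mat n n" and C: "C \<in> carrier_mat n n" and rn: "r \<le> n"
    and C0: "\<And>i j. i < n \<Longrightarrow> j < n \<Longrightarrow> r \<le> i \<or> r \<le> j \<Longrightarrow> C $$ (i, j) = 0"
    and Y: "Y \<subseteq> {0..<n}"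
  shows "degree (det (principal_pad (pencil B C) Y)) \<le> r
    \<and> coeff (det (principal_pad (pencil B C) Y)) r
      = (if {0..<r} \<subseteq> Y
         then det (mat r r (\<lambda>(i, j). C $$ (i, j)))
           * det (principal_pad (mat (n - r) (n - r) (\<lambda>(i, j). B $$ (r + i, r + j))) {j. r + j \<in> Y})
         else 0)"
proof -
  txt \<open>Rows from \<open>r\<close> on are constant, so the top coefficient takes the \<open>t\<close>-part
    of each of the first \<open>r\<close> rows.\<close>
  let ?d = "\<lambda>i. if i < r then 1 else 0 :: nat"
  have entry: "principal_pad (pencil B C) Y $$ (i, j)
      = (if i \<in> Y \<and> j \<in> Y then [:B $$ (i, j), C $$ (i, j):] else if i = j then 1 else 0)"
    if "i < n" "j < n" for i j
    by (simp add: principal_pad_index[OF pencil_carrier[OF B C] that] pencil_index[OF B C that])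
  have sum_d: "(\<Sum>i<n. ?d i) = r"
  proof -
    have "{..<n} \<inter> {i. i < r} = {..<r}" using rn by auto
    then show ?thesis by (simp add: sum.If_cases)
  qed
  have deg: "degree (det (principal_pad (pencil B C) Y)) \<le> (\<Sum>i<n. ?d i)
    \<and> coeff (det (principal_pad (pencil B C) Y)) (\<Sum>i<n. ?d i)
      = det (mat n n (\<lambda>(i, j). coeff (principal_pad (pencil B C) Y $$ (i, j)) (?d i)))"
    by (rule det_poly_mat_row_degrees) (use B C C0 in \<open>auto simp: entry\<close>)
  have K: "mat n n (\<lambda>(i, j). coeff (principal_pad (pencil B C) Y $$ (i, j)) (?d i))
    = mat n n (\<lambda>(i, j). if i < r then if i \<in> Y \<and> j \<in> Y then C $$ (i, j) else 0
                         else principal_pad B Y $$ (i, j))"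
    by (rule eq_matI) (auto simp: entry principal_pad_index[OF B])
  show ?thesis
    using deg det_masked_top_rows_principal_pad[OF B rn Y C0] unfolding sum_d K by simp
qed

lemma sum_subsets_containing_prefix:
  fixes g :: "nat set \<Rightarrow> 'b::comm_monoid_add"
  assumes rk: "r \<le> k" and rn: "r \<le> n"
  shows "(\<Sum>Y | Y \<subseteq> {0..<n} \<and> card Y = k. if {0..<r} \<subseteq> Y then g {j. r + j \<in> Y} else 0)
    = (\<Sum>Z | Z \<subseteq> {0..<n - r} \<and> card Z = k - r. g Z)"
proof -
  let ?i = "\<lambda>Z. {0..<r} \<union> (+) r ` Z" and ?j = "\<lambda>Y. {j. r + j \<in> Y}"
  have i_j: "?i (?j Y) = Y" if "{0..<r} \<subseteq> Y" for Y
  proof (intro equalityI subsetI)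
    fix y assume "y \<in> Y"
    then show "y \<in> ?i (?j Y)"
      by (cases "y < r") (auto simp: image_iff intro!: exI[of _ "y - r"])
  qed (use that in auto)
  have card_i: "card (?i Z) = r + card Z" if "finite Z" for Z
    using that by (subst card_Un_disjoint) (auto simp: card_image)
  have "(\<Sum>Y | Y \<subseteq> {0..<n} \<and> card Y = k. if {0..<r} \<subseteq> Y then g (?j Y) else 0)
      = (\<Sum>Y | (Y \<subseteq> {0..<n} \<and> card Y = k) \<and> {0..<r} \<subseteq> Y. g (?j Y))"
    by (simp add: sum.inter_filter[symmetric] Collect_conj_eq[symmetric] conj_commute)
  also have "\<dots> = (\<Sum>Z | Z \<subseteq> {0..<n - r} \<and> card Z = k - r. g Z)"
  proof (rule sum.reindex_bij_witness[where i = ?i and j = ?j])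
    fix Y assume Y: "Y \<in> {Y. (Y \<subseteq> {0..<n} \<and> card Y = k) \<and> {0..<r} \<subseteq> Y}"
    then show "?i (?j Y) = Y" by (simp add: i_j)
    have sub: "?j Y \<subseteq> {0..<n - r}" using Y by auto
    then have "card Y = r + card (?j Y)"
      using card_i[of "?j Y"] i_j[of Y] Y finite_subset[OF sub] by simp
    with Y sub show "?j Y \<in> {Z. Z \<subseteq> {0..<n - r} \<and> card Z = k - r}" by auto
  next
    fix Z assume Z: "Z \<in> {Z. Z \<subseteq> {0..<n - r} \<and> card Z = k - r}"
    then show "?j (?i Z) = Z" by auto
    have "card (?i Z) = k" using card_i[of Z] Z rk finite_subset[of Z "{0..<n - r}"] by simp
    with Z rn show "?i Z \<in> {Y. (Y \<subseteq> {0..<n} \<and> card Y = k) \<and> {0..<r} \<subseteq> Y}" by auto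
  qed simp
  finally show ?thesis .
qed

lemma esym_mat_pencil_low_rank:
  fixes B C :: "'a::idom mat"
  assumes B: "B \<in> carrier_mat n n" and C: "C \<in> carrier_mat n n" and rn: "r \<le> n" and rk: "r \<le> k"
    and C0: "\<And>i j. i < n \<Longrightarrow> j < n \<Longrightarrow> r \<le> i \<or> r \<le> j \<Longrightarrow> C $$ (i, j) = 0"
  shows "degree (esym_mat k (pencil B C)) \<le> r
    \<and> coeff (esym_mat k (pencil B C)) r
      = det (mat r r (\<lambda>(i, j). C $$ (i, j)))
        * esym_mat (k - r) (mat (n - r) (n - r) (\<lambda>(i, j). B $$ (r + i, r + j)))"
proof -
  let ?C1 = "mat r r (\<lambda>(i, j). C $$ (i, j))"
  let ?B2 = "mat (n - r) (n - r) (\<lambda>(i, j). B $$ (r + i, r + j))"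
  have esym: "esym_mat k (pencil B C)
      = (\<Sum>Y | Y \<subseteq> {0..<n} \<and> card Y = k. det (principal_pad (pencil B C) Y))"
    by (rule esym_mat_principal_pad) (simp add: B C)
  note minor = coeff_det_principal_pad_pencil[OF B C rn C0]
  have deg: "degree (esym_mat k (pencil B C)) \<le> r"
    unfolding esym by (intro degree_sum_le) (auto simp: minor)
  have "coeff (esym_mat k (pencil B C)) r
      = (\<Sum>Y | Y \<subseteq> {0..<n} \<and> card Y = k.
           if {0..<r} \<subseteq> Y then det ?C1 * det (principal_pad ?B2 {j. r + j \<in> Y}) else 0)"
    unfolding esym coeff_sum by (intro sum.cong refl) (simp add: minor)
  also have "\<dots> = (\<Sum>Z | Z \<subseteq> {0..<n - r} \<and> card Z = k - r. det ?C1 * det (principal_pad ?B2 Z))"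
    by (rule sum_subsets_containing_prefix[OF rk rn])
  also have "\<dots> = det ?C1 * esym_mat (k - r) ?B2"
    by (simp add: esym_mat_principal_pad[of ?B2 "n - r"] sum_distrib_left)
  finally show ?thesis using deg by simp
qed

section \<open>Bordered determinants and the full QR factorization\<close>

lemma append_rows_zero_carrier:
  "R \<in> carrier_mat r c \<Longrightarrow> r \<le> n \<Longrightarrow> R @\<^sub>r 0\<^sub>m (n - r) c \<in> carrier_mat n c"
  using carrier_append_rows[of R r c "0\<^sub>m (n - r) c" "n - r"] by simp

lemma append_rows_zero_index:
  "R \<in> carrier_mat r c \<Longrightarrow> i < r + m \<Longrightarrow> j < c \<Longrightarrow>
   (R @\<^sub>r 0\<^sub>m m c) $$ (i, j) = (if i < r then R $$ (i, j) else 0)"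
  by (simp add: append_rows_def)

lemma det_bordered_append_rows_zero:
  fixes B R :: "'a::idom mat"
  assumes B: "B \<in> carrier_mat n n" and R: "R \<in> carrier_mat r r" and rn: "r \<le> n"
  shows "det (four_block_mat B (R @\<^sub>r 0\<^sub>m (n - r) r) (R @\<^sub>r 0\<^sub>m (n - r) r)\<^sup>T (0\<^sub>m r r))
    = (-1) ^ r * (det R * det R * det (mat (n - r) (n - r) (\<lambda>(i, j). B $$ (r + i, r + j))))"
proof -
  let ?F = "four_block_mat B (R @\<^sub>r 0\<^sub>m (n - r) r) (R @\<^sub>r 0\<^sub>m (n - r) r)\<^sup>T (0\<^sub>m r r)"
  let ?B2 = "mat (n - r) (n - r) (\<lambda>(i, j). B $$ (r + i, r + j))"
  have E: "R @\<^sub>r 0\<^sub>m (n - r) r \<in> carrier_mat n r" using append_rows_zero_carrier[OF R rn] .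
  have F: "?F \<in> carrier_mat (n + r) (n + r)" using B E by simp
  have F_index: "?F $$ (i, j) =
      (if i < n then if j < n then B $$ (i, j) else if i < r then R $$ (i, j - n) else 0
       else if j < n \<and> j < r then R $$ (j, i - n) else 0)" if "i < n + r" "j < n + r" for i j
    using that B E R rn by (auto simp: append_rows_zero_index)
  txt \<open>Move the last \<open>r\<close> rows to the top, then the first \<open>r\<close> of the remaining rows to the bottom.\<close>
  let ?T = "mat n n (\<lambda>(i, j). ?F $$ (i + r, j))"
  let ?F21 = "mat r n (\<lambda>(i, j). ?F $$ (i, j))"
  have "mat (n + r) (n + r) (\<lambda>(i, j). ?F $$ (if i < n then i + r else i - n, j))
      = four_block_mat ?T (0\<^sub>m n r) ?F21 R"
    by (rule eq_matI) (use R rn in \<open>auto simp: F_index\<close>)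
  moreover have "det (four_block_mat ?T (0\<^sub>m n r) ?F21 R) = det ?T * det R"
    by (rule det_four_block_mat_upper_right_zero[OF _ refl _ R]) auto
  ultimately have s1: "det ?F = (-1) ^ (n * r) * (det ?T * det R)"
    using det_swap_rows[OF F] by simp
  let ?B21 = "mat (n - r) r (\<lambda>(i, j). B $$ (r + i, j))"
  have nr: "r + (n - r) = n" using rn by simp
  have T: "?T \<in> carrier_mat (r + (n - r)) (r + (n - r))" unfolding nr by simp
  have "mat n n (\<lambda>(i, j). ?T $$ (if i < r then i + (n - r) else i - r, j))
      = four_block_mat R\<^sup>T (0\<^sub>m r (n - r)) ?B21 ?B2"
    by (rule eq_matI) (use R rn in \<open>auto simp: F_index\<close>)
  moreover have "det (four_block_mat R\<^sup>T (0\<^sub>m r (n - r)) ?B21 ?B2) = det R * det ?B2"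
    using det_four_block_mat_upper_right_zero[of "R\<^sup>T" r _ "n - r" ?B21 ?B2] R det_transpose[OF R]
    by simp
  ultimately have s2: "det ?T = (-1) ^ (r * (n - r)) * (det R * det ?B2)"
    using det_swap_rows[OF T] unfolding nr by simp
  have "(-1::'a) ^ (n * r) * (-1) ^ (r * (n - r)) = (-1) ^ r"
  proof -
    have "n * r = (r + (n - r)) * r" unfolding nr ..
    then have "n * r + r * (n - r) = 2 * (r * (n - r)) + r * r" by (simp add: algebra_simps)
    then show ?thesis by (simp add: power_add[symmetric] power_mult minus_one_power_iff)
  qed
  then show ?thesis unfolding s1 s2 by (simp add: ac_simps)
qed

lemma conj_trailing_columns:
  fixes Q A :: "'a::comm_semiring_0 mat"
  assumes Q: "Q \<in> carrier_mat n n" and A: "A \<in> carrier_mat n n"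
  shows "(mat n (n - r) (\<lambda>(i, j). Q $$ (i, r + j)))\<^sup>T * A * mat n (n - r) (\<lambda>(i, j). Q $$ (i, r + j))
    = mat (n - r) (n - r) (\<lambda>(i, j). (Q\<^sup>T * A * Q) $$ (r + i, r + j))"
  (is "?P\<^sup>T * A * ?P = ?M")
proof (rule eq_matI)
  fix i j assume "i < dim_row ?M" "j < dim_col ?M"
  then have ij: "i < n - r" "j < n - r" by auto
  have col: "vec n (\<lambda>l. ?P $$ (l, k)) = vec n (\<lambda>l. Q $$ (l, r + k))" if "k < n - r" for k
    using that by (intro eq_vecI) auto
  have col_j: "col ?P j = col Q (r + j)" using ij Q by (intro eq_vecI) auto
  have row: "row (?P\<^sup>T * A) i = row (Q\<^sup>T * A) (r + i)"
    using ij Q A by (intro eq_vecI) (auto simp: col col_def)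
  have "(?P\<^sup>T * A * ?P) $$ (i, j) = row (?P\<^sup>T * A) i \<bullet> col ?P j"
    using ij A by (intro index_mult_mat(1)) auto
  also have "\<dots> = row (Q\<^sup>T * A) (r + i) \<bullet> col Q (r + j)" by (simp only: row col_j)
  also have "\<dots> = (Q\<^sup>T * A * Q) $$ (r + i, r + j)"
    using ij Q A by (intro index_mult_mat(1)[symmetric]) auto
  finally show "(?P\<^sup>T * A * ?P) $$ (i, j) = ?M $$ (i, j)"
    using ij by simp
qed auto

locale full_qr =
  fixes V Q R :: "'a::field mat" and n r :: nat
  assumes Q: "Q \<in> carrier_mat n n" and QtQ: "Q\<^sup>T * Q = 1\<^sub>m n"
    and R: "R \<in> carrier_mat r r" and rn: "r \<le> n"
    and V_eq: "V = Q * (R @\<^sub>r 0\<^sub>m (n - r) r)"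
begin

abbreviation E :: "'a mat" where "E \<equiv> R @\<^sub>r 0\<^sub>m (n - r) r"

lemma E_carrier: "E \<in> carrier_mat n r"
  using append_rows_zero_carrier[OF R rn] .

lemma V_carrier: "V \<in> carrier_mat n r"
  using Q E_carrier by (simp add: V_eq)

lemma QQt: "Q * Q\<^sup>T = 1\<^sub>m n"
  using mat_mult_left_right_inverse[OF transpose_carrier_mat[THEN iffD2, OF Q] Q QtQ] .

lemma QtV: "Q\<^sup>T * V = E"
  using Q E_carrier QtQ
  by (simp add: V_eq assoc_mult_mat[symmetric, of "Q\<^sup>T" n n Q n E r])

lemma VtV: "V\<^sup>T * V = R\<^sup>T * R"
proof -
  have "V\<^sup>T * V = E\<^sup>T * Q\<^sup>T * V"
    unfolding V_eq using Q E_carrier by (simp add: transpose_mult[of Q n n E r])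
  also have "\<dots> = E\<^sup>T * (Q\<^sup>T * V)"
    using Q E_carrier V_carrier by (intro assoc_mult_mat) auto
  also have "\<dots> = R\<^sup>T * R"
    using R rn by (intro eq_matI) (auto simp: QtV append_rows_def scalar_prod_def
        intro!: sum.mono_neutral_cong_right)
  finally show ?thesis .
qed

lemma det_VtV: "det (V\<^sup>T * V) = det R * det R"
  using det_mult[OF transpose_carrier_mat[THEN iffD2, OF R] R] det_transpose[OF R]
  by (simp add: VtV)

lemma EEt_index:
  "i < n \<Longrightarrow> j < n \<Longrightarrow> (E * E\<^sup>T) $$ (i, j) = (if i < r \<and> j < r then (R * R\<^sup>T) $$ (i, j) else 0)"
  using R rn by (auto simp: append_rows_def scalar_prod_def)

lemma EEt_zero: "i < n \<Longrightarrow> j < n \<Longrightarrow> r \<le> i \<or> r \<le> j \<Longrightarrow> (E * E\<^sup>T) $$ (i, j) = 0"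
  by (auto simp: EEt_index)

lemma det_leading_block_EEt: "det (mat r r (\<lambda>(i, j). (E * E\<^sup>T) $$ (i, j))) = det R * det R"
proof -
  have "mat r r (\<lambda>(i, j). (E * E\<^sup>T) $$ (i, j)) = R * R\<^sup>T"
    using R rn by (intro eq_matI) (auto simp: EEt_index)
  then show ?thesis
    using det_mult[OF R transpose_carrier_mat[THEN iffD2, OF R]] det_transpose[OF R] by simp
qed

lemma Q_cancel: "X \<in> carrier_mat n m \<Longrightarrow> Q * (Q\<^sup>T * X) = X"
  using assoc_mult_mat[OF Q transpose_carrier_mat[THEN iffD2, OF Q], of X m] QQt by simp

lemma similar_mat_wit_conj: "M \<in> carrier_mat n n \<Longrightarrow> similar_mat_wit M (Q\<^sup>T * M * Q) Q Q\<^sup>T"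
  using Q QQt QtQ
  by (intro similar_mat_witI[of _ _ n]) (simp_all add: assoc_mult_mat[of _ n n _ n _ n] Q_cancel)

lemma conj_VVt: "Q\<^sup>T * (V * V\<^sup>T) * Q = E * E\<^sup>T"
proof -
  have VtQ: "V\<^sup>T * Q = E\<^sup>T"
    using transpose_mult[OF transpose_carrier_mat[THEN iffD2, OF Q] V_carrier] QtV by simp
  have "Q\<^sup>T * (V * V\<^sup>T) * Q = Q\<^sup>T * (V * V\<^sup>T * Q)"
    using Q V_carrier by (intro assoc_mult_mat) auto
  also have "\<dots> = Q\<^sup>T * (V * (V\<^sup>T * Q))"
    using Q V_carrier by (subst assoc_mult_mat) auto
  also have "\<dots> = (Q\<^sup>T * V) * (V\<^sup>T * Q)"
    using Q V_carrier by (intro assoc_mult_mat[symmetric]) auto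
  finally show ?thesis by (simp add: QtV VtQ)
qed

lemma similar_pencil:
  assumes "A \<in> carrier_mat n n"
  shows "similar_mat (pencil A (V * V\<^sup>T)) (pencil (Q\<^sup>T * A * Q) (E * E\<^sup>T))"
  using similar_mat_pencil[OF similar_mat_wit_conj[OF assms] similar_mat_wit_conj[of "V * V\<^sup>T"]]
    V_carrier conj_VVt by simp

lemma det_bordered_conj:
  assumes A: "A \<in> carrier_mat n n"
  shows "det (four_block_mat A V V\<^sup>T (0\<^sub>m r r)) = det (four_block_mat (Q\<^sup>T * A * Q) E E\<^sup>T (0\<^sub>m r r))"
    (is "det ?F = det ?F'")
proof (rule det_similar, unfold similar_mat_def, intro exI)
  have "V\<^sup>T = 1\<^sub>m r * E\<^sup>T * Q\<^sup>T"
    using Q E_carrier by (simp add: V_eq transpose_mult[of Q n n E r])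
  moreover have "V = Q * E * 1\<^sub>m r" using Q E_carrier by (simp add: V_eq)
  moreover have "similar_mat_wit (0\<^sub>m r r :: 'a mat) (0\<^sub>m r r) (1\<^sub>m r) (1\<^sub>m r)"
    by (rule similar_mat_witI[of _ _ r]) auto
  ultimately show "similar_mat_wit ?F ?F'
      (four_block_mat Q (0\<^sub>m n r) (0\<^sub>m r n) (1\<^sub>m r)) (four_block_mat Q\<^sup>T (0\<^sub>m n r) (0\<^sub>m r n) (1\<^sub>m r))"
    using A E_carrier by (intro similar_mat_wit_four_block[OF similar_mat_wit_conj[OF A]]) auto
qed

end

theorem lemma3p10:
  fixes A V Qfull R :: "real mat" and n r :: nat
  assumes "A \<in> carrier_mat n n" and "V \<in> carrier_mat n r" and "r \<le> n"
    and "Qfull \<in> carrier_mat n n" and "Qfull\<^sup>T * Qfull = 1\<^sub>m n"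
    and "R \<in> carrier_mat r r" and "upper_triangular R"
    and "V = Qfull * (R @\<^sub>r 0\<^sub>m (n - r) r)"
  defines "Qperp \<equiv> mat n (n - r) (\<lambda>(i, j). Qfull $$ (i, r + j))"
  shows "(\<forall>k\<ge>r. degree (esym_mat k (pencil_mat A V)) \<le> r \<and>
            coeff (esym_mat k (pencil_mat A V)) r
              = det (V\<^sup>T * V) * esym_mat (k - r) (Qperp\<^sup>T * A * Qperp))
       \<and> coeff (det (pencil_mat A V)) r = det (V\<^sup>T * V) * det (Qperp\<^sup>T * A * Qperp)
       \<and> det (V\<^sup>T * V) * det (Qperp\<^sup>T * A * Qperp)
           = (-1) ^ r * det (four_block_mat A V (V\<^sup>T) (0\<^sub>m r r))"
proof -
  interpret full_qr V Qfull R n r using assms(3-6,8) by unfold_locales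
  note A = assms(1)
  let ?B = "Qfull\<^sup>T * A * Qfull"
  have B: "?B \<in> carrier_mat n n" and EEt: "E * E\<^sup>T \<in> carrier_mat n n" using A Q E_carrier by auto
  have Qperp: "Qperp\<^sup>T * A * Qperp = mat (n - r) (n - r) (\<lambda>(i, j). ?B $$ (r + i, r + j))"
    unfolding Qperp_def by (rule conj_trailing_columns[OF Q A])
  have esym: "degree (esym_mat k (pencil_mat A V)) \<le> r
      \<and> coeff (esym_mat k (pencil_mat A V)) r
        = det (V\<^sup>T * V) * esym_mat (k - r) (Qperp\<^sup>T * A * Qperp)"
    if "r \<le> k" for k
    using esym_mat_pencil_low_rank[OF B EEt rn that EEt_zero]
      esym_mat_similar[OF similar_pencil[OF A]]
    unfolding pencil_mat_eq_pencil Qperp det_leading_block_EEt det_VtV by simp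
  have "coeff (det (pencil_mat A V)) r = det (V\<^sup>T * V) * det (Qperp\<^sup>T * A * Qperp)"
    using esym[OF rn] esym_mat_dim_eq_det[of "pencil_mat A V" n] A V_carrier
      esym_mat_dim_eq_det[of "Qperp\<^sup>T * A * Qperp" "n - r"]
    by (simp add: Qperp pencil_mat_eq_pencil)
  moreover have "det (V\<^sup>T * V) * det (Qperp\<^sup>T * A * Qperp)
      = (-1) ^ r * det (four_block_mat A V V\<^sup>T (0\<^sub>m r r))"
    using det_bordered_conj[OF A] det_bordered_append_rows_zero[OF B R rn]
    by (simp add: Qperp det_VtV mult.assoc[symmetric])
  ultimately show ?thesis using esym by blast
qed

end
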